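(* Let $G$ be a locally compact group and $\mathcal K$ a class of finite algebras. Then $G$ is approximable by systems of $\mathcal K$ in the group sense (Definition B below) if and only if it is approximable by systems of $\mathcal K$ in the general sense (Definition A below).
   Context: An algebra is a set with one binary operation; $(H,\odot)$ denotes a finite algebra. Definition A (general): for a compact $C\subseteq G$ and a finite cover $\mathcal U$ of $C$ by open sets, $j:H\to G$ gives a $(C,\mathcal U)$-approximation if every $U\in\mathcal U$ with $U\cap C\neq\emptyset$ contains a point of $j(H)$, and for all $x,y\in H$ with $j(x),j(y),j(x)j(y)\in C$ there is $U\in\mathcal U$ with $j(x\odot y)\in U$ and $j(x)j(y)\in U$; $G$ is approximable by $\mathcal K$ if for all such $C,\mathcal U$ there is a $(C,\mathcal U)$-approximation $(H,j)$ with $H\in\mathcal K$ and $j$ injective. Definition B (group): for a compact $C\subseteq G$ and a neighborhood $U$ of the unit, $j:H\to G$ gives a $(C,U)$-approximation if $C\subseteq j(H)U$ and for all $x,y\in H$ with $j(x),j(y),j(x)j(y)\in C$ one has $j(x\odot y)\in j(x)j(y)U$; $G$ is approximable by $\mathcal K$ if for all compact $C$ and all neighborhoods $U$ of the unit there is a $(C,U)$-approximation $(H,j)$ with $H\in\mathcal K$ and $j$ injective. *)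

theory Defs
  imports "HOL-Analysis.Analysis"
begin

definition topological_group ::
  "('g::topological_space \<Rightarrow> 'g \<Rightarrow> 'g) \<Rightarrow> 'g \<Rightarrow> ('g \<Rightarrow> 'g) \<Rightarrow> bool" where
  "topological_group gmul e ginv \<longleftrightarrow>
     group gmul e ginv \<and>
     continuous_on UNIV (\<lambda>p. gmul (fst p) (snd p)) \<and>
     continuous_on UNIV ginv"

definition finite_algebra :: "'h set \<times> ('h \<Rightarrow> 'h \<Rightarrow> 'h) \<Rightarrow> bool" where
  "finite_algebra A \<longleftrightarrow> finite (fst A) \<and>
     (\<forall>x\<in>fst A. \<forall>y\<in>fst A. snd A x y \<in> fst A)"

definition general_approx ::
  "('g::topological_space \<Rightarrow> 'g \<Rightarrow> 'g) \<Rightarrow> 'g set \<Rightarrow> 'g set set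
     \<Rightarrow> 'h set \<Rightarrow> ('h \<Rightarrow> 'h \<Rightarrow> 'h) \<Rightarrow> ('h \<Rightarrow> 'g) \<Rightarrow> bool" where
  "general_approx gmul C \<U> H hop j \<longleftrightarrow>
     (\<forall>U\<in>\<U>. U \<inter> C \<noteq> {} \<longrightarrow> (\<exists>x\<in>H. j x \<in> U)) \<and>
     (\<forall>x\<in>H. \<forall>y\<in>H. j x \<in> C \<and> j y \<in> C \<and> gmul (j x) (j y) \<in> C \<longrightarrow>
        (\<exists>U\<in>\<U>. j (hop x y) \<in> U \<and> gmul (j x) (j y) \<in> U))"

definition approximable_general ::
  "('g::topological_space \<Rightarrow> 'g \<Rightarrow> 'g) \<Rightarrow> ('h set \<times> ('h \<Rightarrow> 'h \<Rightarrow> 'h)) set \<Rightarrow> bool" where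
  "approximable_general gmul \<K> \<longleftrightarrow>
     (\<forall>C \<U>. compact C \<and> finite \<U> \<and> (\<forall>U\<in>\<U>. open U) \<and> C \<subseteq> \<Union>\<U> \<longrightarrow>
        (\<exists>H hop j. (H, hop) \<in> \<K> \<and> inj_on j H \<and> general_approx gmul C \<U> H hop j))"

definition group_approx ::
  "('g \<Rightarrow> 'g \<Rightarrow> 'g) \<Rightarrow> 'g set \<Rightarrow> 'g set
     \<Rightarrow> 'h set \<Rightarrow> ('h \<Rightarrow> 'h \<Rightarrow> 'h) \<Rightarrow> ('h \<Rightarrow> 'g) \<Rightarrow> bool" where
  "group_approx gmul C U H hop j \<longleftrightarrow>
     C \<subseteq> {gmul (j x) u | x u. x \<in> H \<and> u \<in> U} \<and>
     (\<forall>x\<in>H. \<forall>y\<in>H. j x \<in> C \<and> j y \<in> C \<and> gmul (j x) (j y) \<in> C \<longrightarrow>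
        j (hop x y) \<in> {gmul (gmul (j x) (j y)) u | u. u \<in> U})"

definition approximable_group ::
  "('g::topological_space \<Rightarrow> 'g \<Rightarrow> 'g) \<Rightarrow> 'g \<Rightarrow> ('h set \<times> ('h \<Rightarrow> 'h \<Rightarrow> 'h)) set \<Rightarrow> bool" where
  "approximable_group gmul e \<K> \<longleftrightarrow>
     (\<forall>C U. compact C \<and> (\<exists>V. open V \<and> e \<in> V \<and> V \<subseteq> U) \<longrightarrow>
        (\<exists>H hop j. (H, hop) \<in> \<K> \<and> inj_on j H \<and> group_approx gmul C U H hop j))"

end

theory Submission
  imports Defs
begin

text \<open>Both notions ask for an injective map j from H into G whose image is coarsely dense in C
  and on which the operation of H is close to the product of G near C; they differ only in how
  closeness is measured: by a neighbourhood V of the unit, or by a finite open cover of C.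
  Compactness of C converts one into the other: for a finite open cover there is a V such that
  each translate c V with c in C lies in a single member of the cover, and for a V there is a
  finite cover of C by open sets W with W\<inverse>W \<subseteq> V.\<close>

lemma continuous_on_prod_open_box:
  fixes f :: "'a::topological_space \<times> 'b::topological_space \<Rightarrow> 'c::topological_space"
  assumes "continuous_on UNIV f" "open U" "f (a, b) \<in> U"
  obtains A B where "open A" "open B" "a \<in> A" "b \<in> B" "A \<times> B \<subseteq> f -` U"
  using open_prod_elim[OF open_vimage[OF assms(2,1)]] assms(3) by (metis mem_Sigma_iff vimageI2)

lemma compact_uniform_nbhd_in_open_cover:
  fixes f :: "'a::topological_space \<times> 'b::topological_space \<Rightarrow> 'c::topological_space"
  assumes f: "continuous_on UNIV f" and "compact C"
    and \<U>: "\<And>U. U \<in> \<U> \<Longrightarrow> open U" "\<And>c. c \<in> C \<Longrightarrow> \<exists>U\<in>\<U>. f (c, b) \<in> U"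
  obtains V where "open V" "b \<in> V" "\<And>c. c \<in> C \<Longrightarrow> \<exists>U\<in>\<U>. \<forall>v\<in>V. f (c, v) \<in> U"
proof -
  have "\<exists>A W U. open A \<and> open W \<and> c \<in> A \<and> b \<in> W \<and> U \<in> \<U> \<and> (\<forall>x\<in>A. \<forall>v\<in>W. f (x, v) \<in> U)"
    if "c \<in> C" for c
  proof -
    obtain U where U: "U \<in> \<U>" "f (c, b) \<in> U"
      using \<U>(2) \<open>c \<in> C\<close> by blast
    obtain A W where "open A" "open W" "c \<in> A" "b \<in> W"
      "A \<times> W \<subseteq> f -` U"
      by (rule continuous_on_prod_open_box[OF f \<U>(1)[OF U(1)] U(2)])
    with U show ?thesis
      by blast
  qed
  then obtain A W U where AWU: "\<And>c. c \<in> C \<Longrightarrow> open (A c) \<and> open (W c) \<and> c \<in> A c \<and> b \<in> W c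
      \<and> U c \<in> \<U> \<and> (\<forall>x\<in>A c. \<forall>v\<in>W c. f (x, v) \<in> U c)"
    by metis
  have "C \<subseteq> (\<Union>c\<in>C. A c)"
    using AWU by blast
  then obtain K where K: "K \<subseteq> C" "finite K" "C \<subseteq> (\<Union>k\<in>K. A k)"
    using compactE_image[OF \<open>compact C\<close>, of C A] AWU by metis
  show thesis
  proof (rule that)
    show "open (\<Inter>k\<in>K. W k)" "b \<in> (\<Inter>k\<in>K. W k)"
      using K AWU by (auto intro!: open_INT)
  next
    fix c assume "c \<in> C"
    then obtain k where "k \<in> K" "c \<in> A k"
      using K(3) by blast
    with K(1) AWU[of k] show "\<exists>U\<in>\<U>. \<forall>v\<in>\<Inter>k\<in>K. W k. f (c, v) \<in> U"
      by blast
  qed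
qed

lemma topological_group_group:
  assumes "topological_group gmul e ginv"
  shows "group gmul e ginv"
  using assms unfolding topological_group_def by blast

lemma topological_group_continuous_on_mult:
  assumes "topological_group gmul e ginv"
  shows "continuous_on UNIV (\<lambda>p. gmul (fst p) (snd p))"
  using assms unfolding topological_group_def by blast

lemma topological_group_continuous_on_inv:
  assumes "topological_group gmul e ginv"
  shows "continuous_on UNIV ginv"
  using assms unfolding topological_group_def by blast

lemma topological_group_continuous_on_left_div:
  assumes "topological_group gmul e ginv"
  shows "continuous_on UNIV (\<lambda>p. gmul (ginv (fst p)) (snd p))"
proof -
  have "continuous_on UNIV (\<lambda>p. (ginv (fst p), snd p))"
    by (intro continuous_intros continuous_on_compose2[OF topological_group_continuous_on_inv[OF assms]])
      auto
  from continuous_on_compose2[OF topological_group_continuous_on_mult[OF assms] this] show ?thesis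
    by simp
qed

lemma topological_group_continuous_on_right_div:
  assumes "topological_group gmul e ginv"
  shows "continuous_on UNIV (\<lambda>v. gmul a (ginv v))"
proof -
  have "continuous_on UNIV (\<lambda>v. (a, ginv v))"
    by (intro continuous_intros continuous_on_compose2[OF topological_group_continuous_on_inv[OF assms]])
      auto
  from continuous_on_compose2[OF topological_group_continuous_on_mult[OF assms] this] show ?thesis
    by simp
qed

lemma group_approx_mono:
  assumes "group_approx gmul C V H hop j" "V \<subseteq> U"
  shows "group_approx gmul C U H hop j"
  using assms unfolding group_approx_def by blast

lemma group_approx_imp_general_approx:
  assumes G: "topological_group gmul e ginv"
    and "compact C" "finite \<U>" "\<And>U. U \<in> \<U> \<Longrightarrow> open U" "C \<subseteq> \<Union>\<U>"
  obtains V where "open V" "e \<in> V"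
    "\<And>(H :: 'h set) hop j. group_approx gmul C V H hop j \<Longrightarrow> general_approx gmul C \<U> H hop j"
proof -
  interpret group gmul e ginv
    by (rule topological_group_group[OF G])
  have cover: "\<exists>U\<in>\<U>. (\<lambda>p. gmul (fst p) (snd p)) (c, e) \<in> U" if "c \<in> C" for c
    using that assms(5) by auto
  obtain V\<^sub>1 where V\<^sub>1: "open V\<^sub>1" "e \<in> V\<^sub>1"
    "\<And>c. c \<in> C \<Longrightarrow> \<exists>U\<in>\<U>. \<forall>v\<in>V\<^sub>1. gmul c v \<in> U"
    by (rule compact_uniform_nbhd_in_open_cover[where \<U> = \<U>,
          OF topological_group_continuous_on_mult[OF G] \<open>compact C\<close> assms(4) cover])
      auto
  define \<U>' where "\<U>' = {U\<in>\<U>. U \<inter> C \<noteq> {}}"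
  have "\<exists>c. c \<in> U \<inter> C" if "U \<in> \<U>'" for U
    using that unfolding \<U>'_def by blast
  then obtain p where p: "\<And>U. U \<in> \<U>' \<Longrightarrow> p U \<in> U \<inter> C"
    by metis
  define V\<^sub>2 where "V\<^sub>2 = (\<Inter>U\<in>\<U>'. (\<lambda>v. gmul (p U) (ginv v)) -` U)"
  \<comment> \<open>Secures density: if p U = j x u with u in this set, then j x = p U u\<inverse> lies in U.\<close>
  have "open V\<^sub>2"
    unfolding V\<^sub>2_def \<U>'_def using assms(3,4)
    by (auto intro!: open_INT open_vimage topological_group_continuous_on_right_div[OF G])
  moreover have "e \<in> V\<^sub>2"
    unfolding V\<^sub>2_def using p by auto
  moreover have "general_approx gmul C \<U> H hop j"
    if approx: "group_approx gmul C (V\<^sub>1 \<inter> V\<^sub>2) H hop j" for H hop j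
    unfolding general_approx_def
  proof (intro conjI ballI impI)
    fix U assume "U \<in> \<U>" "U \<inter> C \<noteq> {}"
    then have U: "U \<in> \<U>'"
      unfolding \<U>'_def by simp
    then obtain x u where "x \<in> H" "u \<in> V\<^sub>2" "p U = gmul (j x) u"
      using approx p unfolding group_approx_def by blast
    moreover from this U have "gmul (p U) (ginv u) \<in> U"
      unfolding V\<^sub>2_def by blast
    ultimately show "\<exists>x\<in>H. j x \<in> U"
      by (auto simp: assoc)
  next
    fix x y assume "x \<in> H" "y \<in> H" and C: "j x \<in> C \<and> j y \<in> C \<and> gmul (j x) (j y) \<in> C"
    then obtain u where "u \<in> V\<^sub>1" "j (hop x y) = gmul (gmul (j x) (j y)) u"
      using approx unfolding group_approx_def by blast
    moreover obtain U where "U \<in> \<U>" "\<forall>v\<in>V\<^sub>1. gmul (gmul (j x) (j y)) v \<in> U"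
      using V\<^sub>1(3) C by blast
    ultimately show "\<exists>U\<in>\<U>. j (hop x y) \<in> U \<and> gmul (j x) (j y) \<in> U"
      using V\<^sub>1(2) by (metis right_neutral)
  qed
  ultimately show thesis
    using that[of "V\<^sub>1 \<inter> V\<^sub>2"] V\<^sub>1 by blast
qed

lemma compact_cover_by_open_sets_with_left_quotients_in:
  assumes G: "topological_group gmul e ginv"
    and "compact C" "open V" "e \<in> V"
  obtains \<W> where "finite \<W>" "\<And>W. W \<in> \<W> \<Longrightarrow> open W" "C \<subseteq> \<Union>\<W>"
    "\<And>W a b. W \<in> \<W> \<Longrightarrow> a \<in> W \<Longrightarrow> b \<in> W \<Longrightarrow> gmul (ginv a) b \<in> V"
proof -
  interpret group gmul e ginv
    by (rule topological_group_group[OF G])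
  have "\<exists>W. open W \<and> c \<in> W \<and> (\<forall>a\<in>W. \<forall>b\<in>W. gmul (ginv a) b \<in> V)" for c
  proof -
    have diagonal_in_V: "(\<lambda>p. gmul (ginv (fst p)) (snd p)) (c, c) \<in> V"
      using \<open>e \<in> V\<close> by simp
    obtain A B where "open A" "open B" "c \<in> A" "c \<in> B"
      "A \<times> B \<subseteq> (\<lambda>p. gmul (ginv (fst p)) (snd p)) -` V"
      by (rule continuous_on_prod_open_box[OF topological_group_continuous_on_left_div[OF G]
            \<open>open V\<close> diagonal_in_V])
    then show ?thesis
      by (intro exI[of _ "A \<inter> B"]) auto
  qed
  then obtain N where N: "\<And>c. open (N c) \<and> c \<in> N c \<and> (\<forall>a\<in>N c. \<forall>b\<in>N c. gmul (ginv a) b \<in> V)"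
    by metis
  then have "C \<subseteq> (\<Union>c\<in>C. N c)"
    by blast
  then obtain K where K: "finite K" "C \<subseteq> (\<Union>k\<in>K. N k)"
    using compactE_image[OF \<open>compact C\<close>, of C N] N by metis
  show thesis
    by (rule that[of "N ` K"]) (use K N in auto)
qed

lemma general_approx_imp_group_approx:
  assumes "group gmul e ginv" and "general_approx gmul C \<W> H hop j" and "C \<subseteq> \<Union>\<W>"
    and small: "\<And>W a b. W \<in> \<W> \<Longrightarrow> a \<in> W \<Longrightarrow> b \<in> W \<Longrightarrow> gmul (ginv a) b \<in> V"
  shows "group_approx gmul C V H hop j"
proof -
  interpret group gmul e ginv
    by (rule assms(1))
  show ?thesis
    unfolding group_approx_def
  proof (intro conjI ballI impI subsetI)
    fix c assume "c \<in> C"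
    then obtain W where "W \<in> \<W>" "c \<in> W"
      using assms(3) by blast
    moreover from this \<open>c \<in> C\<close> obtain x where "x \<in> H" "j x \<in> W"
      using assms(2) unfolding general_approx_def by blast
    ultimately have "gmul (ginv (j x)) c \<in> V"
      using small by blast
    moreover have "c = gmul (j x) (gmul (ginv (j x)) c)"
      by (simp add: assoc[symmetric])
    ultimately show "c \<in> {gmul (j x) u |x u. x \<in> H \<and> u \<in> V}"
      using \<open>x \<in> H\<close> by blast
  next
    fix x y assume "x \<in> H" "y \<in> H" "j x \<in> C \<and> j y \<in> C \<and> gmul (j x) (j y) \<in> C"
    then obtain W where "W \<in> \<W>" "j (hop x y) \<in> W" "gmul (j x) (j y) \<in> W"
      using assms(2) unfolding general_approx_def by blast
    then have "gmul (ginv (gmul (j x) (j y))) (j (hop x y)) \<in> V"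
      using small by blast
    moreover have "j (hop x y) = gmul (gmul (j x) (j y)) (gmul (ginv (gmul (j x) (j y))) (j (hop x y)))"
      by (simp add: assoc[symmetric])
    ultimately show "j (hop x y) \<in> {gmul (gmul (j x) (j y)) u |u. u \<in> V}"
      by blast
  qed
qed

theorem proposition3:
  fixes gmul :: "'g::t2_space \<Rightarrow> 'g \<Rightarrow> 'g" and e :: 'g and ginv :: "'g \<Rightarrow> 'g"
    and \<K> :: "('h set \<times> ('h \<Rightarrow> 'h \<Rightarrow> 'h)) set"
  assumes "topological_group gmul e ginv"
    and "locally_compact_space (euclidean :: 'g topology)"
    and "\<forall>A\<in>\<K>. finite_algebra A"
  shows "approximable_group gmul e \<K> \<longleftrightarrow> approximable_general gmul \<K>"
proof
  assume approx: "approximable_group gmul e \<K>"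
  show "approximable_general gmul \<K>"
    unfolding approximable_general_def
  proof (intro allI impI, elim conjE)
    fix C :: "'g set" and \<U> assume "compact C" "finite \<U>" "\<forall>U\<in>\<U>. open U" "C \<subseteq> \<Union>\<U>"
    obtain V where "open V" "e \<in> V"
      and V: "\<And>(H :: 'h set) hop j. group_approx gmul C V H hop j \<Longrightarrow> general_approx gmul C \<U> H hop j"
      using group_approx_imp_general_approx[OF assms(1) \<open>compact C\<close> \<open>finite \<U>\<close>
            \<open>\<forall>U\<in>\<U>. open U\<close>[rule_format] \<open>C \<subseteq> \<Union>\<U>\<close>] by metis
    then obtain H hop j where "(H, hop) \<in> \<K>" "inj_on j H" "group_approx gmul C V H hop j"
      using approx[unfolded approximable_group_def, rule_format, of C V] \<open>compact C\<close> by blast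
    with V show "\<exists>H hop j. (H, hop) \<in> \<K> \<and> inj_on j H \<and> general_approx gmul C \<U> H hop j"
      by blast
  qed
next
  assume approx: "approximable_general gmul \<K>"
  show "approximable_group gmul e \<K>"
    unfolding approximable_group_def
  proof (intro allI impI, elim conjE exE)
    fix C U V :: "'g set" assume "compact C" "open V" "e \<in> V" "V \<subseteq> U"
    obtain \<W> where \<W>: "finite \<W>" "\<And>W. W \<in> \<W> \<Longrightarrow> open W" "C \<subseteq> \<Union>\<W>"
      "\<And>W a b. W \<in> \<W> \<Longrightarrow> a \<in> W \<Longrightarrow> b \<in> W \<Longrightarrow> gmul (ginv a) b \<in> V"
      using compact_cover_by_open_sets_with_left_quotients_in[OF assms(1) \<open>compact C\<close>
          \<open>open V\<close> \<open>e \<in> V\<close>] by metis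
    then obtain H hop j where "(H, hop) \<in> \<K>" "inj_on j H" "general_approx gmul C \<W> H hop j"
      using approx[unfolded approximable_general_def, rule_format, of C \<W>] \<open>compact C\<close> by blast
    moreover from this(3) have "group_approx gmul C V H hop j"
      by (rule general_approx_imp_group_approx[OF topological_group_group[OF assms(1)] _ \<W>(3,4)])
    then have "group_approx gmul C U H hop j"
      using \<open>V \<subseteq> U\<close> by (rule group_approx_mono)
    ultimately show "\<exists>H hop j. (H, hop) \<in> \<K> \<and> inj_on j H \<and> group_approx gmul C U H hop j"
      by blast
  qed
qed

end
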